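(* Let $H$ be a monoid in $\mathcal{C}_d$ with $d \ge 3$. If the convex cone generated by $H$ in the $\mathbb{Q}$-vector space $\mathbb{Q}\otimes_{\mathbb{Z}}\mathrm{gp}(H)$ is polyhedral, then the elasticity $\rho(H)$ is either a rational number or $\infty$.
   Context: Monoids are commutative, cancellative, reduced. $\mathrm{gp}(H)$ is the Grothendieck group of $H$; $\mathcal{C}_d$ is the collection of all rank-$d$ submonoids of free commutative monoids of finite rank (rank = rank of $\mathrm{gp}(H)$); such monoids are atomic. The cone generated by $H$ is the set of all finite nonnegative rational linear combinations of elements of $H$; a convex cone is polyhedral if it has only finitely many faces (equivalently, is finitely generated as a cone). For nonzero $x\in H$, $\mathsf{L}(x)$ is the set of all $n$ such that $x$ is a sum of $n$ atoms, $\rho(x)=\sup\mathsf{L}(x)/\inf\mathsf{L}(x)$, and $\rho(H)=\sup\{\rho(x)\mid x\in H\setminus\{0\}\}$. *)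

theory Defs
  imports Main "HOL-Library.Extended_Real"
begin

text \<open>The free commutative monoid of finite rank is modelled as the functions
  'n \<Rightarrow> nat for a finite index type 'n (i.e. N^n with n = CARD('n)).
  Monoids in C_d are (up to isomorphism) submonoids H of such a monoid whose
  Grothendieck group has rank d.\<close>

definition vzero :: "'n \<Rightarrow> nat" where
  "vzero = (\<lambda>i. 0)"

definition vadd :: "('n \<Rightarrow> nat) \<Rightarrow> ('n \<Rightarrow> nat) \<Rightarrow> ('n \<Rightarrow> nat)" where
  "vadd x y = (\<lambda>i. x i + y i)"

definition is_submonoid :: "('n::finite \<Rightarrow> nat) set \<Rightarrow> bool" where
  "is_submonoid H \<longleftrightarrow> vzero \<in> H \<and> (\<forall>x\<in>H. \<forall>y\<in>H. vadd x y \<in> H)"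

text \<open>Embedding into the rational vector space Q^n (which contains Q \<otimes> gp(H)).\<close>
definition to_rat :: "('n \<Rightarrow> nat) \<Rightarrow> ('n \<Rightarrow> rat)" where
  "to_rat x = (\<lambda>i. of_nat (x i))"

definition rat_lin_indep :: "('n \<Rightarrow> rat) set \<Rightarrow> bool" where
  "rat_lin_indep S \<longleftrightarrow> finite S \<and>
     (\<forall>c :: ('n \<Rightarrow> rat) \<Rightarrow> rat. (\<forall>i. (\<Sum>v\<in>S. c v * v i) = 0) \<longrightarrow> (\<forall>v\<in>S. c v = 0))"

text \<open>rank of gp(H) = dim_Q (Q \<otimes> gp(H)) = maximal number of Q-linearly independent
  elements of H.\<close>
definition gp_rank :: "('n \<Rightarrow> nat) set \<Rightarrow> nat \<Rightarrow> bool" where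
  "gp_rank H d \<longleftrightarrow>
     (\<exists>S. S \<subseteq> to_rat ` H \<and> rat_lin_indep S \<and> card S = d) \<and>
     (\<forall>S. S \<subseteq> to_rat ` H \<and> rat_lin_indep S \<longrightarrow> card S \<le> d)"

definition rat_cone :: "('n \<Rightarrow> rat) set \<Rightarrow> ('n \<Rightarrow> rat) set" where
  "rat_cone A = {v. \<exists>S c. finite S \<and> S \<subseteq> A \<and> (\<forall>a\<in>S. (c a :: rat) \<ge> 0) \<and>
                          v = (\<lambda>i. \<Sum>a\<in>S. c a * a i)}"

definition polyhedral_cone :: "('n \<Rightarrow> rat) set \<Rightarrow> bool" where
  "polyhedral_cone C \<longleftrightarrow> (\<exists>F. finite F \<and> rat_cone F = C)"

definition atoms :: "('n \<Rightarrow> nat) set \<Rightarrow> ('n \<Rightarrow> nat) set" where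
  "atoms H = {u \<in> H. u \<noteq> vzero \<and>
                 (\<forall>a\<in>H. \<forall>b\<in>H. u = vadd a b \<longrightarrow> a = vzero \<or> b = vzero)}"

definition lsum :: "('n \<Rightarrow> nat) list \<Rightarrow> ('n \<Rightarrow> nat)" where
  "lsum as = (\<lambda>i. sum_list (map (\<lambda>a. a i) as))"

definition lengths :: "('n \<Rightarrow> nat) set \<Rightarrow> ('n \<Rightarrow> nat) \<Rightarrow> nat set" where
  "lengths H x = {k. \<exists>as. length as = k \<and> set as \<subseteq> atoms H \<and> lsum as = x}"

text \<open>rho(x) = sup L(x) / inf L(x) (the set of lengths is nonempty and consists of
  positive integers for nonzero x in an atomic monoid; sup L(x) = \<infinity> when L(x)
  is infinite).\<close>
definition elast_elem :: "('n \<Rightarrow> nat) set \<Rightarrow> ('n \<Rightarrow> nat) \<Rightarrow> ereal" where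
  "elast_elem H x =
     (if finite (lengths H x)
      then ereal (real (Max (lengths H x)) / real (Min (lengths H x)))
      else \<infinity>)"

definition elasticity :: "('n \<Rightarrow> nat) set \<Rightarrow> ereal" where
  "elasticity H = (SUP x \<in> H - {vzero}. elast_elem H x)"

end

(*
  If H has infinitely many atoms, their coordinate sums |a| are unbounded. Polyhedrality
  yields finitely many nonzero g_1, ..., g_r in H such that some multiple N a of every
  element a of H is a combination m_1 g_1 + ... + m_r g_r with natural coefficients. For an
  atom a, N a has a factorization of length N, and refining each g_j into atoms gives one
  of length at least m_1 + ... + m_r >= N |a| / (|g_1| + ... + |g_r|). Hence rho(H) = infinity.

  If H has finitely many atoms, a pair of factorizations of the same element is a vector of
  atom multiplicities. By Dickson's lemma there are only finitely many minimal such pairs,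
  every pair is a sum of minimal ones, and the length ratio of a sum is at most the larger
  of the two ratios (mediant inequality). So rho(H) is attained at some element x, and
  rho(H) = max L(x) / min L(x) is rational.
*)
theory Submission
  imports Defs "HOL-Library.FuncSet"
begin

section \<open>Lengths of factorizations\<close>

definition vnorm :: "('n::finite \<Rightarrow> nat) \<Rightarrow> nat" where
  "vnorm x = (\<Sum>i\<in>UNIV. x i)"

lemma vnorm_add: "vnorm (\<lambda>i. x i + y i) = vnorm x + vnorm y"
  by (simp add: vnorm_def sum.distrib)

lemma coord_le_vnorm: "x i \<le> vnorm x"
  unfolding vnorm_def by (rule member_le_sum) auto

lemma vnorm_pos: "x \<noteq> vzero \<Longrightarrow> 0 < vnorm x"
  using coord_le_vnorm[of x] by (fastforce simp: vzero_def)

lemma finite_vnorm_le: "finite {x :: 'n::finite \<Rightarrow> nat. vnorm x \<le> B}"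
proof (rule finite_subset)
  show "{x. vnorm x \<le> B} \<subseteq> PiE UNIV (\<lambda>_. {..B})"
    using coord_le_vnorm order_trans by (fastforce simp: PiE_iff)
qed (simp add: finite_PiE)

lemma lsum_Nil: "lsum [] = vzero"
  by (simp add: lsum_def vzero_def)

lemma lsum_Cons: "lsum (a # as) = (\<lambda>i. a i + lsum as i)"
  by (simp add: lsum_def)

lemma lsum_append: "lsum (as @ bs) = (\<lambda>i. lsum as i + lsum bs i)"
  by (simp add: lsum_def)

lemma atoms_subset: "atoms H \<subseteq> H"
  by (auto simp: atoms_def)

lemma atom_nonzero: "a \<in> atoms H \<Longrightarrow> a \<noteq> vzero"
  by (auto simp: atoms_def)

lemma lsum_in_submonoid: "is_submonoid H \<Longrightarrow> set as \<subseteq> H \<Longrightarrow> lsum as \<in> H"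
  by (induction as) (auto simp: lsum_Nil lsum_Cons is_submonoid_def vadd_def)

lemma in_submonoid_if_in_lengths: "is_submonoid H \<Longrightarrow> k \<in> lengths H x \<Longrightarrow> x \<in> H"
  using lsum_in_submonoid atoms_subset unfolding lengths_def by blast

lemma length_le_vnorm_lsum:
  fixes H :: "('n::finite \<Rightarrow> nat) set"
  shows "set as \<subseteq> atoms H \<Longrightarrow> length as \<le> vnorm (lsum as)"
proof (induction as)
  case (Cons a as)
  then have "a \<in> atoms H" by simp
  then have "0 < vnorm a" by (rule vnorm_pos[OF atom_nonzero])
  with Cons show ?case by (simp add: lsum_Cons vnorm_add)
qed simp

lemma finite_lengths: "finite (lengths (H :: ('n::finite \<Rightarrow> nat) set) x)"
  by (rule finite_subset[of _ "{..vnorm x}"])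
     (auto simp: lengths_def dest: length_le_vnorm_lsum)

lemma eq_vzero_if_zero_in_lengths: "0 \<in> lengths H x \<Longrightarrow> x = vzero"
  by (auto simp: lengths_def lsum_Nil)

lemma zero_in_lengths: "0 \<in> lengths H (\<lambda>i. 0)"
  unfolding lengths_def by (intro CollectI exI[of _ "[]"]) (auto simp: lsum_def)

lemma one_in_lengths_atom: "a \<in> atoms H \<Longrightarrow> 1 \<in> lengths H a"
  unfolding lengths_def by (intro CollectI exI[of _ "[a]"]) (auto simp: lsum_def)

lemma lengths_add:
  assumes "k \<in> lengths H x" "l \<in> lengths H y"
  shows "k + l \<in> lengths H (\<lambda>i. x i + y i)"
proof -
  obtain as bs where "length as = k" "set as \<subseteq> atoms H" "lsum as = x"
    "length bs = l" "set bs \<subseteq> atoms H" "lsum bs = y"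
    using assms by (auto simp: lengths_def)
  then show ?thesis
    unfolding lengths_def by (intro CollectI exI[of _ "as @ bs"]) (auto simp: lsum_append)
qed

lemma lengths_scale: "k \<in> lengths H x \<Longrightarrow> m * k \<in> lengths H (\<lambda>i. m * x i)"
  by (induction m) (auto simp: zero_in_lengths dest: lengths_add)

lemma lengths_sum:
  assumes "finite S" "\<And>s. s \<in> S \<Longrightarrow> k s \<in> lengths H (f s)"
  shows "(\<Sum>s\<in>S. m s * k s) \<in> lengths H (\<lambda>i. \<Sum>s\<in>S. m s * f s i)"
  using assms
proof (induction S rule: finite_induct)
  case (insert s S)
  then show ?case using lengths_add[OF lengths_scale] by fastforce
qed (simp add: zero_in_lengths)

lemma lengths_nonempty:
  fixes H :: "('n::finite \<Rightarrow> nat) set"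
  assumes "is_submonoid H" "x \<in> H"
  shows "lengths H x \<noteq> {}"
  using assms(2)
proof (induction "vnorm x" arbitrary: x rule: less_induct)
  case less
  show ?case
  proof (cases "x = vzero \<or> x \<in> atoms H")
    case True
    then show ?thesis
      using zero_in_lengths[of H] one_in_lengths_atom by (auto simp: vzero_def)
  next
    case False
    then obtain a b where ab: "a \<in> H" "b \<in> H" "x = vadd a b" "a \<noteq> vzero" "b \<noteq> vzero"
      using less.prems unfolding atoms_def by blast
    then have "vnorm a < vnorm x" "vnorm b < vnorm x"
      using vnorm_pos[of a] vnorm_pos[of b] by (auto simp: vadd_def vnorm_add)
    then obtain k l where "k \<in> lengths H a" "l \<in> lengths H b"
      using less.hyps ab by blast
    then show ?thesis
      using lengths_add ab(3) unfolding vadd_def by blast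
  qed
qed

lemma lengths_Min_Max:
  fixes H :: "('n::finite \<Rightarrow> nat) set"
  assumes "is_submonoid H" "x \<in> H" "x \<noteq> vzero"
  shows "Max (lengths H x) \<in> lengths H x" "Min (lengths H x) \<in> lengths H x"
    and "0 < Min (lengths H x)"
proof -
  show "Max (lengths H x) \<in> lengths H x" and Min: "Min (lengths H x) \<in> lengths H x"
    using lengths_nonempty[OF assms(1,2)] finite_lengths[of H x] by (auto intro: Max_in Min_in)
  show "0 < Min (lengths H x)"
    using eq_vzero_if_zero_in_lengths[of H x] Min assms(3) by (metis gr0I)
qed

lemma elast_elem_eq:
  fixes H :: "('n::finite \<Rightarrow> nat) set"
  shows "elast_elem H x = ereal (real (Max (lengths H x)) / real (Min (lengths H x)))"
  by (simp add: elast_elem_def finite_lengths)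

lemma elast_elem_rational:
  fixes H :: "('n::finite \<Rightarrow> nat) set"
  shows "\<exists>q :: rat. elast_elem H x = ereal (of_rat q)"
  by (rule exI[of _ "of_nat (Max (lengths H x)) / of_nat (Min (lengths H x))"])
     (simp add: elast_elem_eq of_rat_divide)

lemma ratio_le_elast_elem:
  fixes H :: "('n::finite \<Rightarrow> nat) set"
  assumes "is_submonoid H" "x \<in> H" "x \<noteq> vzero" "k \<in> lengths H x" "l \<in> lengths H x"
  shows "ereal (real k / real l) \<le> elast_elem H x"
proof -
  have "k \<le> Max (lengths H x)" "Min (lengths H x) \<le> l"
    using assms(4,5) finite_lengths[of H x] by auto
  then have "real k / real l \<le> real (Max (lengths H x)) / real (Min (lengths H x))"
    using lengths_Min_Max[OF assms(1-3)] by (intro frac_le) auto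
  then show ?thesis by (simp add: elast_elem_eq)
qed

section \<open>Rational vectors and finitely generated cones\<close>

lemma rat_cone_mono: "A \<subseteq> B \<Longrightarrow> rat_cone A \<subseteq> rat_cone B"
  unfolding rat_cone_def by blast

lemma subset_rat_cone: "A \<subseteq> rat_cone A"
proof
  fix a assume "a \<in> A"
  then show "a \<in> rat_cone A"
    unfolding rat_cone_def by (intro CollectI exI[of _ "{a}"] exI[of _ "\<lambda>_. 1"]) auto
qed

lemma rat_cone_finite_iff:
  assumes "finite G"
  shows "v \<in> rat_cone G \<longleftrightarrow> (\<exists>c. (\<forall>a\<in>G. 0 \<le> c a) \<and> v = (\<lambda>i. \<Sum>a\<in>G. c a * a i))"
proof
  assume "v \<in> rat_cone G"
  then obtain S c where S: "S \<subseteq> G" "\<forall>a\<in>S. 0 \<le> c a" "v = (\<lambda>i. \<Sum>a\<in>S. c a * a i)"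
    unfolding rat_cone_def by blast
  define c' where "c' a = (if a \<in> S then c a else 0)" for a
  have "(\<Sum>a\<in>G. c' a * a i) = (\<Sum>a\<in>S. c a * a i)" for i
  proof -
    have "(\<Sum>a\<in>G. c' a * a i) = (\<Sum>a\<in>G. if a \<in> S then c a * a i else 0)"
      by (rule sum.cong) (simp_all add: c'_def)
    also have "\<dots> = (\<Sum>a\<in>S. c a * a i)"
      using assms S(1) by (simp add: sum.inter_restrict[symmetric] Int_absorb1)
    finally show ?thesis .
  qed
  then show "\<exists>c. (\<forall>a\<in>G. 0 \<le> c a) \<and> v = (\<lambda>i. \<Sum>a\<in>G. c a * a i)"
    using S(2,3) by (intro exI[of _ c']) (auto simp: c'_def)
next
  assume "\<exists>c. (\<forall>a\<in>G. 0 \<le> c a) \<and> v = (\<lambda>i. \<Sum>a\<in>G. c a * a i)"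
  then show "v \<in> rat_cone G"
    using assms unfolding rat_cone_def by blast
qed

lemma rat_cone_finite_sum:
  assumes "finite G" "finite S" "S \<subseteq> rat_cone G" "\<forall>s\<in>S. 0 \<le> c s"
  shows "(\<lambda>i. \<Sum>s\<in>S. c s * s i) \<in> rat_cone G"
  using assms(2-4)
proof (induction S rule: finite_induct)
  case empty
  then show ?case
    using rat_cone_finite_iff[OF assms(1)] by (auto intro: exI[of _ "\<lambda>_. 0"])
next
  case (insert s S)
  then obtain e e' where "\<forall>a\<in>G. 0 \<le> e a" "s = (\<lambda>i. \<Sum>a\<in>G. e a * a i)"
    "\<forall>a\<in>G. 0 \<le> e' a" "(\<lambda>i. \<Sum>s\<in>S. c s * s i) = (\<lambda>i. \<Sum>a\<in>G. e' a * a i)"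
    by (auto simp: rat_cone_finite_iff[OF assms(1)])
  then show ?case
    using insert.hyps insert.prems(2)
    by (auto simp: rat_cone_finite_iff[OF assms(1)] fun_eq_iff sum_distrib_left
          sum.distrib distrib_right mult.assoc
          intro!: exI[of _ "\<lambda>a. c s * e a + e' a"])
qed

lemma rat_cone_rat_cone_finite: "finite G \<Longrightarrow> rat_cone (rat_cone G) = rat_cone G"
  by (auto simp: rat_cone_def[of "rat_cone G"] intro: rat_cone_finite_sum
      dest: subset_rat_cone[THEN subsetD])

lemma finite_subset_rat_cone:
  assumes "finite F" "F \<subseteq> rat_cone A"
  shows "\<exists>G. finite G \<and> G \<subseteq> A \<and> F \<subseteq> rat_cone G"
  using assms
proof (induction F rule: finite_induct)
  case (insert f F)
  then obtain G where G: "finite G" "G \<subseteq> A" "F \<subseteq> rat_cone G" by auto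
  obtain S c where S: "finite S" "S \<subseteq> A" "\<forall>a\<in>S. 0 \<le> c a" "f = (\<lambda>i. \<Sum>a\<in>S. c a * a i)"
    using insert.prems unfolding rat_cone_def by blast
  then have "f \<in> rat_cone S"
    unfolding rat_cone_def by blast
  have "insert f F \<subseteq> rat_cone (G \<union> S)"
    using G(3) \<open>f \<in> rat_cone S\<close> rat_cone_mono[of G "G \<union> S"] rat_cone_mono[of S "G \<union> S"]
    by blast
  then show ?case using G S(1,2) by (intro exI[of _ "G \<union> S"]) simp
qed auto

lemma polyhedral_cone_finite_generators:
  assumes "polyhedral_cone (rat_cone A)"
  shows "\<exists>G. finite G \<and> G \<subseteq> A \<and> rat_cone G = rat_cone A"
proof -
  obtain F where F: "finite F" "rat_cone F = rat_cone A"
    using assms unfolding polyhedral_cone_def by blast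
  moreover have "F \<subseteq> rat_cone A"
    using subset_rat_cone[of F] F(2) by simp
  ultimately obtain G where G: "finite G" "G \<subseteq> A" "F \<subseteq> rat_cone G"
    using finite_subset_rat_cone by metis
  have "rat_cone A = rat_cone F"
    using F(2) by simp
  also have "\<dots> \<subseteq> rat_cone (rat_cone G)"
    using G(3) by (rule rat_cone_mono)
  also have "\<dots> = rat_cone G"
    using G(1) by (rule rat_cone_rat_cone_finite)
  finally have "rat_cone A \<subseteq> rat_cone G" .
  with rat_cone_mono[OF G(2)] have "rat_cone G = rat_cone A"
    by (rule subset_antisym)
  with G(1,2) show ?thesis
    by blast
qed

lemma rat_cone_Diff_zero: "rat_cone (A - {\<lambda>i. 0}) = rat_cone A"
proof
  show "rat_cone A \<subseteq> rat_cone (A - {\<lambda>i. 0})"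
  proof
    fix v assume "v \<in> rat_cone A"
    then obtain S c where S: "finite S" "S \<subseteq> A" "\<forall>a\<in>S. 0 \<le> c a"
      "v = (\<lambda>i. \<Sum>a\<in>S. c a * a i)"
      unfolding rat_cone_def by blast
    have "(\<Sum>a\<in>S - {\<lambda>i. 0}. c a * a i) = (\<Sum>a\<in>S. c a * a i)" for i
      using S(1) by (intro sum.mono_neutral_left) auto
    then show "v \<in> rat_cone (A - {\<lambda>i. 0})"
      using S unfolding rat_cone_def by (intro CollectI exI[of _ "S - {\<lambda>i. 0}"] exI[of _ c]) auto
  qed
qed (rule rat_cone_mono, blast)

lemma common_denominator:
  assumes "finite S" "\<forall>s\<in>S. (0::rat) \<le> e s"
  shows "\<exists>N::nat. 0 < N \<and> (\<exists>m. \<forall>s\<in>S. of_nat N * e s = of_nat (m s))"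
  using assms
proof (induction S rule: finite_induct)
  case empty
  show ?case by (intro exI[of _ 1]) auto
next
  case (insert s S)
  then obtain N m where N: "0 < N" "\<forall>t\<in>S. of_nat N * e t = of_nat (m t)" by auto
  obtain p q where pq: "quotient_of (e s) = (p, q)" by fastforce
  have q: "0 < q" and es: "e s = of_int p / of_int q"
    using quotient_of_denom_pos[OF pq] quotient_of_div[OF pq] .
  have "0 \<le> p" using insert.prems q es by (simp add: zero_le_divide_iff)
  define m' where "m' t = (if t = s then N * nat p else nat q * m t)" for t
  have "of_nat (N * nat q) * e t = of_nat (m' t)" if "t \<in> insert s S" for t
  proof (cases "t = s")
    case True
    then show ?thesis using q \<open>0 \<le> p\<close> by (simp add: m'_def es)
  next
    case False
    then have "of_nat (N * nat q) * e t = of_nat (nat q) * (of_nat N * e t)"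
      by simp
    also have "\<dots> = of_nat (m' t)" using N(2) False that by (simp add: m'_def)
    finally show ?thesis .
  qed
  then show ?case using N(1) q by (intro exI[of _ "N * nat q"]) auto
qed

lemma inj_to_rat: "inj to_rat"
  by (rule injI) (simp add: to_rat_def fun_eq_iff)

lemma to_rat_eq_zero_iff: "to_rat x = (\<lambda>i. 0) \<longleftrightarrow> x = vzero"
  by (simp add: to_rat_def vzero_def fun_eq_iff)

lemma zero_notin_rat_lin_indep: "rat_lin_indep S \<Longrightarrow> (\<lambda>i. 0) \<notin> S"
  unfolding rat_lin_indep_def
proof (intro notI, elim conjE)
  assume S: "finite S" "\<forall>c. (\<forall>i. (\<Sum>v\<in>S. c v * v i) = 0) \<longrightarrow> (\<forall>v\<in>S. c v = 0)"
    and zero: "(\<lambda>i. 0) \<in> S"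
  define c :: "('a \<Rightarrow> rat) \<Rightarrow> rat" where "c v = (if v = (\<lambda>i. 0) then 1 else 0)" for v
  have "(\<Sum>v\<in>S. c v * v i) = 0" for i
    by (rule sum.neutral) (simp add: c_def)
  then have "c (\<lambda>i. 0) = 0"
    using S(2) zero by blast
  then show False
    by (simp add: c_def)
qed

lemma nonzero_elem_if_gp_rank_pos:
  assumes "gp_rank H d" "0 < d"
  shows "\<exists>x\<in>H. x \<noteq> vzero"
proof -
  obtain S where S: "S \<subseteq> to_rat ` H" "rat_lin_indep S" "card S = d"
    using assms(1) unfolding gp_rank_def by blast
  then have "S \<noteq> {}"
    using assms(2) by auto
  then obtain v where "v \<in> S"
    by blast
  then obtain x where "x \<in> H" "to_rat x = v"
    using S(1) by blast
  moreover have "v \<noteq> (\<lambda>i. 0)"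
    using zero_notin_rat_lin_indep[OF S(2)] \<open>v \<in> S\<close> by blast
  ultimately show ?thesis
    using to_rat_eq_zero_iff[of x] by auto
qed

lemma nat_combination_if_in_rat_cone:
  assumes "finite G" "to_rat x \<in> rat_cone (to_rat ` G)"
  shows "\<exists>N m. 0 < N \<and> (\<forall>i. N * x i = (\<Sum>g\<in>G. m g * g i))"
proof -
  obtain c where c: "\<forall>a\<in>to_rat ` G. 0 \<le> c a" "to_rat x = (\<lambda>i. \<Sum>a\<in>to_rat ` G. c a * a i)"
    using assms by (auto simp: rat_cone_finite_iff)
  have x: "of_nat (x i) = (\<Sum>g\<in>G. c (to_rat g) * of_nat (g i))" for i
    using fun_cong[OF c(2), of i] sum.reindex[OF inj_on_subset[OF inj_to_rat subset_UNIV]]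
    by (simp add: to_rat_def)
  obtain N m where N: "0 < N" "\<forall>g\<in>G. of_nat N * c (to_rat g) = of_nat (m g)"
    using common_denominator[OF assms(1), of "c \<circ> to_rat"] c(1) by auto
  have "of_nat (N * x i) = (of_nat (\<Sum>g\<in>G. m g * g i) :: rat)" for i
  proof -
    have "of_nat (N * x i) = (\<Sum>g\<in>G. (of_nat N * c (to_rat g)) * (of_nat (g i) :: rat))"
      by (simp add: x sum_distrib_left mult.assoc)
    also have "\<dots> = of_nat (\<Sum>g\<in>G. m g * g i)"
      using N(2) by simp
    finally show ?thesis .
  qed
  then have "N * x i = (\<Sum>g\<in>G. m g * g i)" for i
    by (simp only: of_nat_eq_iff)
  then show ?thesis
    using N(1) by blast
qed

lemma polyhedral_cone_nat_generators:
  fixes H :: "('n \<Rightarrow> nat) set"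
  assumes "polyhedral_cone (rat_cone (to_rat ` H))"
  shows "\<exists>G. finite G \<and> G \<subseteq> H - {vzero} \<and>
           (\<forall>x\<in>H. \<exists>N m. 0 < N \<and> (\<forall>i. N * x i = (\<Sum>g\<in>G. m g * g i)))"
proof -
  obtain G0 where G0: "finite G0" "G0 \<subseteq> to_rat ` H" "rat_cone G0 = rat_cone (to_rat ` H)"
    using polyhedral_cone_finite_generators[OF assms] by blast
  define G where "G = {h \<in> H - {vzero}. to_rat h \<in> G0}"
  have G: "to_rat ` G = G0 - {\<lambda>i. 0}"
  proof
    show "to_rat ` G \<subseteq> G0 - {\<lambda>i. 0}"
      by (auto simp: G_def to_rat_eq_zero_iff)
    show "G0 - {\<lambda>i. 0} \<subseteq> to_rat ` G"
    proof
      fix v assume v: "v \<in> G0 - {\<lambda>i. 0}"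
      then obtain h where "h \<in> H" "v = to_rat h"
        using G0(2) by auto
      with v show "v \<in> to_rat ` G"
        by (auto simp: G_def to_rat_eq_zero_iff)
    qed
  qed
  then have fin: "finite G"
    using G0(1) finite_imageD[of to_rat G] inj_on_subset[OF inj_to_rat] by auto
  have "\<exists>N m. 0 < N \<and> (\<forall>i. N * x i = (\<Sum>g\<in>G. m g * g i))" if "x \<in> H" for x
  proof (rule nat_combination_if_in_rat_cone[OF fin])
    show "to_rat x \<in> rat_cone (to_rat ` G)"
      using that subset_rat_cone[of "to_rat ` H"] G0(3) by (auto simp: G rat_cone_Diff_zero)
  qed
  moreover have "G \<subseteq> H - {vzero}"
    by (auto simp: G_def)
  ultimately show ?thesis
    using fin by blast
qed

section \<open>Infinitely many atoms\<close>

lemma vnorm_nat_combination: "vnorm (\<lambda>i. \<Sum>g\<in>G. m g * g i) = (\<Sum>g\<in>G. m g * vnorm g)"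
  by (simp add: vnorm_def sum_distrib_left sum.swap[of _ G])

lemma lengths_nat_combination_bound:
  fixes H :: "('n::finite \<Rightarrow> nat) set"
  assumes H: "is_submonoid H" and G: "finite G" "G \<subseteq> H - {vzero}"
    and x: "\<forall>i. N * x i = (\<Sum>g\<in>G. m g * g i)"
  shows "\<exists>K\<in>lengths H (\<lambda>i. N * x i). N * vnorm x \<le> (\<Sum>g\<in>G. vnorm g) * K"
proof -
  have "\<forall>g\<in>G. \<exists>k. k \<in> lengths H g \<and> 0 < k"
    using G(2) lengths_nonempty[OF H] eq_vzero_if_zero_in_lengths by (fastforce intro: gr0I)
  then obtain k where k: "\<forall>g\<in>G. k g \<in> lengths H g \<and> 0 < k g"
    by (metis bchoice)
  define K where "K = (\<Sum>g\<in>G. m g * k g)"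
  have "(\<lambda>i. N * x i) = (\<lambda>i. \<Sum>g\<in>G. m g * g i)"
    using x by simp
  then have "K \<in> lengths H (\<lambda>i. N * x i)"
    unfolding K_def using lengths_sum[OF G(1), of k H "\<lambda>g. g" m] k by simp
  moreover have "N * vnorm x \<le> (\<Sum>g\<in>G. vnorm g) * K"
  proof -
    have "N * vnorm x = (\<Sum>g\<in>G. m g * vnorm g)"
      using vnorm_nat_combination[of m G] x by (simp add: vnorm_def sum_distrib_left)
    also have "\<dots> \<le> (\<Sum>g\<in>G. m g * k g * (\<Sum>g\<in>G. vnorm g))"
      using k member_le_sum[OF _ _ G(1), of _ vnorm]
      by (intro sum_mono mult_mono) (auto simp: Suc_le_eq)
    also have "\<dots> = K * (\<Sum>g\<in>G. vnorm g)"
      by (simp add: K_def sum_distrib_right)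
    finally show ?thesis
      by (simp add: mult.commute)
  qed
  ultimately show ?thesis ..
qed

lemma elasticity_infinite_if_infinite_atoms:
  fixes H :: "('n::finite \<Rightarrow> nat) set"
  assumes H: "is_submonoid H" and cone: "polyhedral_cone (rat_cone (to_rat ` H))"
    and atoms: "infinite (atoms H)"
  shows "elasticity H = \<infinity>"
proof -
  obtain G where G: "finite G" "G \<subseteq> H - {vzero}"
    and comb: "\<forall>x\<in>H. \<exists>N m. 0 < N \<and> (\<forall>i. N * x i = (\<Sum>g\<in>G. m g * g i))"
    using polyhedral_cone_nat_generators[OF cone] by blast
  define M where "M = (\<Sum>g\<in>G. vnorm g)"
  have "\<exists>x\<in>H - {vzero}. ereal (real n) \<le> elast_elem H x" for n :: nat
  proof -
    have "\<not> atoms H \<subseteq> {x. vnorm x \<le> n * M}"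
      using atoms finite_subset[OF _ finite_vnorm_le] by blast
    then obtain a where a: "a \<in> atoms H" "n * M < vnorm a"
      by (auto simp: subset_iff not_le)
    then obtain N m where N: "0 < N" "\<forall>i. N * a i = (\<Sum>g\<in>G. m g * g i)"
      using comb atoms_subset by blast
    define x where "x = (\<lambda>i. N * a i)"
    obtain K where K: "K \<in> lengths H x" "N * vnorm a \<le> M * K"
      using lengths_nat_combination_bound[OF H G N(2)] unfolding M_def x_def by blast
    have lN: "N \<in> lengths H x"
      using lengths_scale[OF one_in_lengths_atom[OF a(1)], of N] by (simp add: x_def)
    have xH: "x \<in> H - {vzero}"
      using in_submonoid_if_in_lengths[OF H lN] atom_nonzero[OF a(1)] N(1)
      by (auto simp: x_def vzero_def fun_eq_iff)
    have "N * n * M < M * K"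
      using a(2) K(2) N(1) by (metis mult.assoc mult_less_mono2 order_less_le_trans)
    then have "N * n < K"
      by (simp add: mult.commute)
    then have "ereal (real n) \<le> ereal (real K / real N)"
      using N(1) by (simp add: field_simps flip: of_nat_mult)
    also have "\<dots> \<le> elast_elem H x"
      using ratio_le_elast_elem[OF H _ _ K(1) lN] xH by simp
    finally show ?thesis
      using xH by blast
  qed
  then show ?thesis
    unfolding elasticity_def by (rule SUP_PInfty)
qed

section \<open>Dickson's lemma\<close>

lemma nat_seq_incseq_subseq:
  fixes g :: "nat \<Rightarrow> nat"
  shows "\<exists>\<tau>. strict_mono \<tau> \<and> incseq (g \<circ> \<tau>)"
proof -
  obtain \<tau> :: "nat \<Rightarrow> nat" where \<tau>: "strict_mono \<tau>" "monoseq (g \<circ> \<tau>)"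
    using seq_monosub[of g] by (auto simp: o_def)
  show ?thesis
  proof (cases "incseq (g \<circ> \<tau>)")
    case False
    then have dec: "decseq (g \<circ> \<tau>)"
      using \<tau>(2) by (simp add: monoseq_iff)
    define N where "N = arg_min (g \<circ> \<tau>) (\<lambda>_. True)"
    have "(g \<circ> \<tau>) (n + N) = (g \<circ> \<tau>) N" for n
      using decseqD[OF dec, of N "n + N"] arg_min_nat_le[of "\<lambda>_. True" n "g \<circ> \<tau>"]
        arg_min_nat_le[of "\<lambda>_. True" "n + N" "g \<circ> \<tau>"]
      by (simp add: N_def)
    then have "incseq (g \<circ> (\<lambda>n. \<tau> (n + N)))"
      by (simp add: incseq_def o_def)
    moreover have "strict_mono (\<lambda>n. \<tau> (n + N))"
      using \<tau>(1) by (simp add: strict_mono_def)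
    ultimately show ?thesis by blast
  qed (use \<tau>(1) in blast)
qed

lemma dickson_subseq:
  fixes f :: "nat \<Rightarrow> 'a \<Rightarrow> nat"
  assumes "finite I"
  shows "\<exists>\<sigma>. strict_mono \<sigma> \<and> (\<forall>k\<in>I. incseq (\<lambda>n. f (\<sigma> n) k))"
  using assms
proof (induction I rule: finite_induct)
  case empty
  show ?case using strict_mono_id by blast
next
  case (insert k I)
  then obtain \<sigma> :: "nat \<Rightarrow> nat" where \<sigma>: "strict_mono \<sigma>" "\<forall>k\<in>I. incseq (\<lambda>n. f (\<sigma> n) k)"
    by blast
  obtain \<tau> :: "nat \<Rightarrow> nat" where \<tau>: "strict_mono \<tau>" "incseq ((\<lambda>n. f (\<sigma> n) k) \<circ> \<tau>)"
    using nat_seq_incseq_subseq by blast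
  have "incseq (\<lambda>n. f (\<sigma> (\<tau> n)) k')" if "k' \<in> I" for k'
    using \<sigma>(2) that \<tau>(1) by (auto simp: incseq_def strict_mono_less_eq)
  then have "\<forall>k'\<in>insert k I. incseq (\<lambda>n. f ((\<sigma> \<circ> \<tau>) n) k')"
    using \<tau>(2) by (simp add: o_def)
  moreover have "strict_mono (\<sigma> \<circ> \<tau>)"
    using \<sigma>(1) \<tau>(1) by (simp add: strict_mono_def)
  ultimately show ?case by blast
qed

lemma dickson:
  fixes f :: "nat \<Rightarrow> 'a \<Rightarrow> nat"
  assumes "finite I"
  shows "\<exists>i j. i < j \<and> (\<forall>k\<in>I. f i k \<le> f j k)"
proof -
  obtain \<sigma> :: "nat \<Rightarrow> nat" where "strict_mono \<sigma>" "\<forall>k\<in>I. incseq (\<lambda>n. f (\<sigma> n) k)"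
    using dickson_subseq[OF assms] by blast
  then show ?thesis
    by (intro exI[of _ "\<sigma> 0"] exI[of _ "\<sigma> 1"]) (auto simp: strict_mono_def incseq_def)
qed

section \<open>Pairs of factorizations over finitely many atoms\<close>

text \<open>A pair of factorizations of one element over the atoms A is encoded by the
  multiplicities w (a, True) and w (a, False) of each atom a in the two factorizations.\<close>

type_synonym 'n fpair = "('n \<Rightarrow> nat) \<times> bool \<Rightarrow> nat"

definition pair_value :: "('n \<Rightarrow> nat) set \<Rightarrow> 'n fpair \<Rightarrow> bool \<Rightarrow> 'n \<Rightarrow> nat" where
  "pair_value A w b = (\<lambda>i. \<Sum>a\<in>A. w (a, b) * a i)"

definition pair_length :: "('n \<Rightarrow> nat) set \<Rightarrow> 'n fpair \<Rightarrow> bool \<Rightarrow> nat" where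
  "pair_length A w b = (\<Sum>a\<in>A. w (a, b))"

definition factorization_pairs :: "('n \<Rightarrow> nat) set \<Rightarrow> 'n fpair set" where
  "factorization_pairs A = {w. (\<forall>a b. a \<notin> A \<longrightarrow> w (a, b) = 0) \<and>
     pair_value A w True = pair_value A w False \<and> 0 < pair_length A w True}"

definition length_ratio :: "('n \<Rightarrow> nat) set \<Rightarrow> 'n fpair \<Rightarrow> real" where
  "length_ratio A w = real (pair_length A w True) / real (pair_length A w False)"

definition minimal_pairs :: "('n \<Rightarrow> nat) set \<Rightarrow> 'n fpair set" where
  "minimal_pairs A = {w \<in> factorization_pairs A. \<forall>w' \<in> factorization_pairs A. w' \<le> w \<longrightarrow> w' = w}"

lemma pair_value_add:
  "pair_value A (\<lambda>j. u j + v j) b = (\<lambda>i. pair_value A u b i + pair_value A v b i)"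
  by (simp add: pair_value_def distrib_right sum.distrib)

lemma pair_length_add: "pair_length A (\<lambda>j. u j + v j) b = pair_length A u b + pair_length A v b"
  by (simp add: pair_length_def sum.distrib)

lemma pair_length_eq_0_iff: "finite A \<Longrightarrow> pair_length A w b = 0 \<longleftrightarrow> (\<forall>a\<in>A. w (a, b) = 0)"
  by (simp add: pair_length_def)

lemma pair_value_eq_zero_iff:
  assumes "finite A" "vzero \<notin> A"
  shows "pair_value A w b = vzero \<longleftrightarrow> (\<forall>a\<in>A. w (a, b) = 0)"
proof
  assume "pair_value A w b = vzero"
  then have "\<forall>i. \<forall>a\<in>A. w (a, b) * a i = 0"
    using assms(1) by (simp add: pair_value_def vzero_def fun_eq_iff)
  show "\<forall>a\<in>A. w (a, b) = 0"
  proof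
    fix a assume "a \<in> A"
    then have "a \<noteq> (\<lambda>i. 0)"
      using assms(2) by (auto simp: vzero_def)
    then obtain i where "a i \<noteq> 0"
      by (auto simp: fun_eq_iff)
    with \<open>\<forall>i. \<forall>a\<in>A. w (a, b) * a i = 0\<close> \<open>a \<in> A\<close> show "w (a, b) = 0"
      by (metis mult_eq_0_iff)
  qed
qed (simp add: pair_value_def vzero_def)

lemma pair_length_pos:
  assumes "finite A" "vzero \<notin> A" "w \<in> factorization_pairs A"
  shows "0 < pair_length A w b"
proof (rule ccontr)
  assume "\<not> 0 < pair_length A w b"
  then have "pair_value A w b = vzero"
    using assms(1,2) by (simp add: pair_length_eq_0_iff pair_value_eq_zero_iff)
  then have "pair_value A w True = vzero"
    using assms(3) by (cases b) (simp_all add: factorization_pairs_def)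
  then have "pair_length A w True = 0"
    using assms(1,2) by (simp add: pair_length_eq_0_iff pair_value_eq_zero_iff)
  with assms(3) show False
    by (simp add: factorization_pairs_def)
qed

lemma diff_in_factorization_pairs:
  assumes A: "finite A" "vzero \<notin> A"
    and w: "w \<in> factorization_pairs A" "w' \<in> factorization_pairs A" "w' \<le> w" "w' \<noteq> w"
  shows "(\<lambda>j. w j - w' j) \<in> factorization_pairs A"
proof -
  define w'' where "w'' j = w j - w' j" for j
  have "w j = w' j + w'' j" for j
    using le_funD[OF w(3), of j] by (simp add: w''_def)
  then have w_split: "w = (\<lambda>j. w' j + w'' j)"
    by (simp add: fun_eq_iff)
  have "pair_value A w'' True = pair_value A w'' False"
    using w(1,2) pair_value_add[of A w' w''] by (simp add: factorization_pairs_def fun_eq_iff flip: w_split)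
  moreover have "0 < pair_length A w'' True"
  proof (rule ccontr)
    assume "\<not> 0 < pair_length A w'' True"
    then have "\<forall>a\<in>A. w'' (a, b) = 0" for b
      using \<open>pair_value A w'' True = pair_value A w'' False\<close> A
      by (cases b) (auto simp: pair_length_eq_0_iff pair_value_eq_zero_iff[symmetric])
    moreover have "\<forall>a b. a \<notin> A \<longrightarrow> w'' (a, b) = 0"
      using w(1) by (simp add: w''_def factorization_pairs_def)
    ultimately have "w'' = (\<lambda>j. 0)"
      by (metis surj_pair)
    then show False
      using w_split w(4) by simp
  qed
  moreover have "\<forall>a b. a \<notin> A \<longrightarrow> w'' (a, b) = 0"
    using w(1) by (simp add: w''_def factorization_pairs_def)
  ultimately have "w'' \<in> factorization_pairs A"
    by (simp add: factorization_pairs_def)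
  moreover have "w'' = (\<lambda>j. w j - w' j)"
    by (simp add: w''_def fun_eq_iff)
  ultimately show ?thesis
    by simp
qed

lemma mediant_le_max:
  fixes p1 p2 q1 q2 :: real
  assumes "0 < q1" "0 < q2"
  shows "(p1 + p2) / (q1 + q2) \<le> max (p1 / q1) (p2 / q2)"
proof -
  have "p1 \<le> max (p1 / q1) (p2 / q2) * q1" "p2 \<le> max (p1 / q1) (p2 / q2) * q2"
    using assms by (simp_all add: max_def field_simps)
  then show ?thesis
    using assms by (simp add: pos_divide_le_eq distrib_left)
qed

lemma length_ratio_le_minimal_pair:
  assumes A: "finite A" "vzero \<notin> A" and w: "w \<in> factorization_pairs A"
  shows "\<exists>w0\<in>minimal_pairs A. length_ratio A w \<le> length_ratio A w0"
  using w
proof (induction "pair_length A w True + pair_length A w False" arbitrary: w rule: less_induct)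
  case less
  show ?case
  proof (cases "w \<in> minimal_pairs A")
    case False
    then obtain w' where w': "w' \<in> factorization_pairs A" "w' \<le> w" "w' \<noteq> w"
      using less.prems unfolding minimal_pairs_def by blast
    define w'' where "w'' = (\<lambda>j. w j - w' j)"
    have w'': "w'' \<in> factorization_pairs A"
      unfolding w''_def using diff_in_factorization_pairs[OF A less.prems w'] .
    have w_split: "w = (\<lambda>j. w' j + w'' j)"
      using w'(2) by (simp add: w''_def le_fun_def fun_eq_iff)
    have len: "pair_length A w b = pair_length A w' b + pair_length A w'' b" for b
      by (subst w_split) (rule pair_length_add)
    have pos: "0 < pair_length A v b" if "v \<in> factorization_pairs A" for v b
      using pair_length_pos[OF A that] .
    obtain w1 where w1: "w1 \<in> minimal_pairs A" "length_ratio A w' \<le> length_ratio A w1"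
      using less.hyps[OF _ w'(1)] len pos[OF w''] by fastforce
    obtain w2 where w2: "w2 \<in> minimal_pairs A" "length_ratio A w'' \<le> length_ratio A w2"
      using less.hyps[OF _ w''] len pos[OF w'(1)] by fastforce
    have "length_ratio A w \<le> max (length_ratio A w') (length_ratio A w'')"
      unfolding length_ratio_def len of_nat_add
      using pos[OF w'(1)] pos[OF w''] by (intro mediant_le_max) simp_all
    with w1 w2 show ?thesis
      by (metis max.bounded_iff nle_le order.trans)
  qed (use less.prems in blast)
qed

lemma finite_minimal_pairs:
  fixes A :: "('n \<Rightarrow> nat) set"
  assumes "finite A"
  shows "finite (minimal_pairs A)"
proof (rule ccontr)
  assume "infinite (minimal_pairs A)"
  then obtain f :: "nat \<Rightarrow> 'n fpair" where f: "inj f" "range f \<subseteq> minimal_pairs A"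
    using infinite_countable_subset by blast
  obtain i j where ij: "i < j" "\<forall>k\<in>A \<times> UNIV. f i k \<le> f j k"
    using dickson[of "A \<times> UNIV" f] assms by auto
  have fij: "f i \<in> factorization_pairs A" "f j \<in> minimal_pairs A"
    using f(2) by (auto simp: minimal_pairs_def)
  have "f i \<le> f j"
  proof (rule le_funI)
    fix k :: "('n \<Rightarrow> nat) \<times> bool"
    show "f i k \<le> f j k"
      using ij(2) fij(1) by (cases k, cases "fst k \<in> A") (auto simp: factorization_pairs_def)
  qed
  then have "f i = f j"
    using fij by (auto simp: minimal_pairs_def)
  then show False
    using f(1) ij(1) by (auto dest: injD)
qed

lemma length_ratio_attains_max:
  assumes A: "finite A" "vzero \<notin> A" and "w1 \<in> factorization_pairs A"
  shows "\<exists>w0\<in>factorization_pairs A. \<forall>w\<in>factorization_pairs A. length_ratio A w \<le> length_ratio A w0"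
proof -
  have "minimal_pairs A \<noteq> {}"
    using length_ratio_le_minimal_pair[OF A assms(3)] by blast
  then have "Max (length_ratio A ` minimal_pairs A) \<in> length_ratio A ` minimal_pairs A"
    using finite_minimal_pairs[OF A(1)] by (intro Max_in) auto
  then obtain w0 where w0: "w0 \<in> minimal_pairs A"
    "length_ratio A w0 = Max (length_ratio A ` minimal_pairs A)"
    by auto
  have "length_ratio A w \<le> length_ratio A w0" if w: "w \<in> factorization_pairs A" for w
  proof -
    obtain w' where "w' \<in> minimal_pairs A" "length_ratio A w \<le> length_ratio A w'"
      using length_ratio_le_minimal_pair[OF A w] by blast
    then show ?thesis
      using finite_minimal_pairs[OF A(1)] w0(2) by (simp add: order.trans)
  qed
  moreover have "w0 \<in> factorization_pairs A"
    using w0(1) by (simp add: minimal_pairs_def)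
  ultimately show ?thesis
    by blast
qed

lemma pair_value_length_count_list:
  assumes "finite A" "set cs \<subseteq> A" "\<forall>a\<in>A. w (a, b) = count_list cs a"
  shows "pair_value A w b = lsum cs" "pair_length A w b = length cs"
proof -
  show "pair_value A w b = lsum cs"
    using assms sum_list_map_eq_sum_count2[OF assms(2,1)]
    by (simp add: pair_value_def lsum_def fun_eq_iff)
  show "pair_length A w b = length cs"
    using assms sum_count_set[OF assms(2,1)] by (simp add: pair_length_def)
qed

lemma factorization_pair_of_lengths:
  fixes H :: "('n::finite \<Rightarrow> nat) set"
  assumes "finite (atoms H)" "x \<noteq> vzero" "k \<in> lengths H x" "l \<in> lengths H x"
  shows "\<exists>w\<in>factorization_pairs (atoms H).
           pair_length (atoms H) w True = k \<and> pair_length (atoms H) w False = l"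
proof -
  obtain as bs where as: "length as = k" "set as \<subseteq> atoms H" "lsum as = x"
    and bs: "length bs = l" "set bs \<subseteq> atoms H" "lsum bs = x"
    using assms(3,4) by (auto simp: lengths_def)
  define w where "w = (\<lambda>(a, b). if a \<in> atoms H then count_list (if b then as else bs) a else 0)"
  have T: "pair_value (atoms H) w True = x" "pair_length (atoms H) w True = k"
    using pair_value_length_count_list[OF assms(1) as(2), of w True] as by (simp_all add: w_def)
  have F: "pair_value (atoms H) w False = x" "pair_length (atoms H) w False = l"
    using pair_value_length_count_list[OF assms(1) bs(2), of w False] bs by (simp_all add: w_def)
  have "0 < k"
    using assms(2,3) eq_vzero_if_zero_in_lengths by (metis gr0I)
  with T F have "w \<in> factorization_pairs (atoms H)"
    by (simp add: factorization_pairs_def w_def)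
  with T F show ?thesis
    by blast
qed

lemma pair_length_in_lengths:
  assumes "finite (atoms H)"
  shows "pair_length (atoms H) w b \<in> lengths H (pair_value (atoms H) w b)"
proof -
  have "(\<Sum>a\<in>atoms H. w (a, b) * 1) \<in> lengths H (\<lambda>i. \<Sum>a\<in>atoms H. w (a, b) * a i)"
    by (rule lengths_sum[OF assms one_in_lengths_atom])
  then show ?thesis
    by (simp add: pair_length_def pair_value_def)
qed

lemma length_ratio_le_elast_elem:
  fixes H :: "('n::finite \<Rightarrow> nat) set"
  assumes H: "is_submonoid H" "finite (atoms H)" and w: "w \<in> factorization_pairs (atoms H)"
  shows "pair_value (atoms H) w True \<in> H - {vzero}"
    and "ereal (length_ratio (atoms H) w) \<le> elast_elem H (pair_value (atoms H) w True)"
proof -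
  have A: "vzero \<notin> atoms H"
    using atom_nonzero by blast
  have lT: "pair_length (atoms H) w True \<in> lengths H (pair_value (atoms H) w True)"
    by (rule pair_length_in_lengths[OF H(2)])
  have lF: "pair_length (atoms H) w False \<in> lengths H (pair_value (atoms H) w True)"
    using pair_length_in_lengths[OF H(2), of w False] w by (simp add: factorization_pairs_def)
  have "pair_value (atoms H) w True \<noteq> vzero"
    using pair_length_pos[OF H(2) A w, of True] pair_length_eq_0_iff[OF H(2)]
      pair_value_eq_zero_iff[OF H(2) A]
    by (metis less_irrefl)
  then show x: "pair_value (atoms H) w True \<in> H - {vzero}"
    using in_submonoid_if_in_lengths[OF H(1) lT] by simp
  show "ereal (length_ratio (atoms H) w) \<le> elast_elem H (pair_value (atoms H) w True)"
    using ratio_le_elast_elem[OF H(1) _ _ lT lF] x by (simp add: length_ratio_def)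
qed

lemma elast_elem_eq_length_ratio:
  fixes H :: "('n::finite \<Rightarrow> nat) set"
  assumes "is_submonoid H" "finite (atoms H)" "x \<in> H" "x \<noteq> vzero"
  shows "\<exists>w\<in>factorization_pairs (atoms H). elast_elem H x = ereal (length_ratio (atoms H) w)"
proof -
  obtain w where "w \<in> factorization_pairs (atoms H)"
    "pair_length (atoms H) w True = Max (lengths H x)"
    "pair_length (atoms H) w False = Min (lengths H x)"
    using factorization_pair_of_lengths[OF assms(2,4) lengths_Min_Max(1,2)[OF assms(1,3,4)]]
    by blast
  then show ?thesis
    by (metis elast_elem_eq length_ratio_def)
qed

lemma elasticity_attained_if_finite_atoms:
  fixes H :: "('n::finite \<Rightarrow> nat) set"
  assumes H: "is_submonoid H" "finite (atoms H)" and x: "x \<in> H" "x \<noteq> vzero"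
  shows "\<exists>x0\<in>H - {vzero}. elasticity H = elast_elem H x0"
proof -
  have A: "finite (atoms H)" "vzero \<notin> atoms H"
    using H(2) atom_nonzero by auto
  obtain w1 where "w1 \<in> factorization_pairs (atoms H)"
    using elast_elem_eq_length_ratio[OF H x] by blast
  then obtain w0 where w0: "w0 \<in> factorization_pairs (atoms H)"
    and max: "\<forall>w\<in>factorization_pairs (atoms H). length_ratio (atoms H) w \<le> length_ratio (atoms H) w0"
    using length_ratio_attains_max[OF A] by blast
  define x0 where "x0 = pair_value (atoms H) w0 True"
  have x0: "x0 \<in> H - {vzero}" "ereal (length_ratio (atoms H) w0) \<le> elast_elem H x0"
    using length_ratio_le_elast_elem[OF H w0] by (simp_all add: x0_def)
  have "elast_elem H y \<le> elast_elem H x0" if y: "y \<in> H - {vzero}" for y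
  proof -
    obtain w where "w \<in> factorization_pairs (atoms H)"
      "elast_elem H y = ereal (length_ratio (atoms H) w)"
      using elast_elem_eq_length_ratio[OF H, of y] y by blast
    then show ?thesis
      using max x0(2) by (metis ereal_less_eq(3) order.trans)
  qed
  then have "elasticity H = elast_elem H x0"
    unfolding elasticity_def using x0(1) by (intro antisym SUP_least SUP_upper)
  with x0(1) show ?thesis
    by blast
qed

theorem theorem5p8:
  fixes H :: "('n::finite \<Rightarrow> nat) set" and d :: nat
  assumes "is_submonoid H"
    and "gp_rank H d"
    and "d \<ge> 3"
    and "polyhedral_cone (rat_cone (to_rat ` H))"
  shows "elasticity H = \<infinity> \<or> (\<exists>q :: rat. elasticity H = ereal (of_rat q))"
proof (cases "finite (atoms H)")
  case True
  \<comment> \<open>Only \<open>0 < d\<close> is needed: it excludes \<open>H = {vzero}\<close>, whose elasticity is a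
    supremum over the empty set, i.e. \<open>-\<infinity>\<close>.\<close>
  obtain x where "x \<in> H" "x \<noteq> vzero"
    using nonzero_elem_if_gp_rank_pos[OF assms(2)] assms(3) by auto
  then obtain x0 where "elasticity H = elast_elem H x0"
    using elasticity_attained_if_finite_atoms[OF assms(1) True] by blast
  then show ?thesis
    using elast_elem_rational[of H x0] by simp
next
  case False
  then show ?thesis
    using elasticity_infinite_if_infinite_atoms[OF assms(1,4)] by simp
qed

end
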